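(* If $M$ is a finite monoid that is not commutative, then for every stable order $\le$ on $M$, the ordered monoid $(M,\le)$ satisfies $N^1(M)=\Omega(\log n)$.
   Context: A stable order on a monoid $M$ is a partial order with $x\le y\Rightarrow zx\le zy$ and $xz\le yz$ for all $z\in M$. Non-deterministic communication complexity: for $f:X\times Y\to\{0,1\}$, $N^1(f)$ is the minimum cost of a non-deterministic protocol for $f$; equivalently, up to an additive constant 2, $N^1(f)=\log_2 C^1(f)$, where $C^1(f)$ is the minimum number of rectangles $S\times T\subseteq X\times Y$ on which $f\equiv1$ whose union is $f^{-1}(1)$. An order ideal is a subset $I\subseteq M$ with $y\in I, x\le y\Rightarrow x\in I$. For an order ideal $I$, $N^1(M,I)(n)$ is $N^1$ of the function where Alice receives $m_1,m_3,\dots,m_{2n-1}\in M$, Bob receives $m_2,\dots,m_{2n}\in M$, with value $1$ iff $m_1\cdots m_{2n}\in I$; $N^1(M)(n)=\max_I N^1(M,I)(n)$ over all order ideals. Asymptotics are as $n\to\infty$. *)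

theory Defs
  imports "HOL-Algebra.Group" "HOL-Library.Landau_Symbols"
begin

definition stable_order :: "('a, 'b) monoid_scheme \<Rightarrow> ('a \<Rightarrow> 'a \<Rightarrow> bool) \<Rightarrow> bool" where
  "stable_order M leq \<longleftrightarrow>
     (\<forall>x\<in>carrier M. leq x x) \<and>
     (\<forall>x\<in>carrier M. \<forall>y\<in>carrier M. leq x y \<and> leq y x \<longrightarrow> x = y) \<and>
     (\<forall>x\<in>carrier M. \<forall>y\<in>carrier M. \<forall>z\<in>carrier M. leq x y \<and> leq y z \<longrightarrow> leq x z) \<and>
     (\<forall>x\<in>carrier M. \<forall>y\<in>carrier M. \<forall>z\<in>carrier M.
        leq x y \<longrightarrow> leq (z \<otimes>\<^bsub>M\<^esub> x) (z \<otimes>\<^bsub>M\<^esub> y) \<and> leq (x \<otimes>\<^bsub>M\<^esub> z) (y \<otimes>\<^bsub>M\<^esub> z))"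

definition order_ideal :: "('a, 'b) monoid_scheme \<Rightarrow> ('a \<Rightarrow> 'a \<Rightarrow> bool) \<Rightarrow> 'a set \<Rightarrow> bool" where
  "order_ideal M leq I \<longleftrightarrow> I \<subseteq> carrier M \<and>
     (\<forall>y\<in>I. \<forall>x\<in>carrier M. leq x y \<longrightarrow> x \<in> I)"

definition C1 :: "'x set \<Rightarrow> 'y set \<Rightarrow> ('x \<Rightarrow> 'y \<Rightarrow> bool) \<Rightarrow> nat" where
  "C1 X Y f = (LEAST k. \<exists>R :: ('x set \<times> 'y set) set. finite R \<and> card R = k \<and>
       (\<forall>(S, T)\<in>R. S \<subseteq> X \<and> T \<subseteq> Y \<and> (\<forall>x\<in>S. \<forall>y\<in>T. f x y)) \<and>
       (\<Union>(S, T)\<in>R. S \<times> T) = {(x, y). x \<in> X \<and> y \<in> Y \<and> f x y})"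

text \<open>N^1 = log2 C^1 (equal to the protocol cost up to an additive constant);
  by convention a function with no 1-inputs gets cost 0.\<close>
definition N1 :: "'x set \<Rightarrow> 'y set \<Rightarrow> ('x \<Rightarrow> 'y \<Rightarrow> bool) \<Rightarrow> real" where
  "N1 X Y f = log 2 (max 1 (real (C1 X Y f)))"

text \<open>Interleaved product m1 m2 m3 ... m2n, where Alice holds xs = [m1, m3, ...]
  and Bob holds ys = [m2, m4, ...].\<close>
definition interleave_prod :: "('a, 'b) monoid_scheme \<Rightarrow> 'a list \<Rightarrow> 'a list \<Rightarrow> 'a" where
  "interleave_prod M xs ys =
     foldr (\<lambda>(a, b) acc. a \<otimes>\<^bsub>M\<^esub> (b \<otimes>\<^bsub>M\<^esub> acc)) (zip xs ys) \<one>\<^bsub>M\<^esub>"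

definition inputs :: "('a, 'b) monoid_scheme \<Rightarrow> nat \<Rightarrow> 'a list set" where
  "inputs M n = {xs. length xs = n \<and> set xs \<subseteq> carrier M}"

definition N1_ideal :: "('a, 'b) monoid_scheme \<Rightarrow> 'a set \<Rightarrow> nat \<Rightarrow> real" where
  "N1_ideal M I n = N1 (inputs M n) (inputs M n) (\<lambda>xs ys. interleave_prod M xs ys \<in> I)"

definition N1_monoid :: "('a, 'b) monoid_scheme \<Rightarrow> ('a \<Rightarrow> 'a \<Rightarrow> bool) \<Rightarrow> nat \<Rightarrow> real" where
  "N1_monoid M leq n = Max {N1_ideal M I n | I. order_ideal M leq I}"

end

theory Submission
  imports Defs
begin

text \<open>If \<open>p q \<noteq> q p\<close>, orient the pair so that \<open>q p \<not>\<le> p q\<close>; then the principal ideal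
  below \<open>p q\<close> contains \<open>p q\<close> but not \<open>q p\<close>. Let Alice hold \<open>p\<close> in round \<open>i\<close> and Bob hold
  \<open>q\<close> in round \<open>j\<close>, all other letters being \<open>1\<close>: the product is \<open>p q\<close> for \<open>i \<le> j\<close> and
  \<open>q p\<close> for \<open>i > j\<close>. The diagonal pairs \<open>i = j\<close> therefore form a triangular fooling set
  of size \<open>n\<close>, so every cover of the 1-inputs needs \<open>n\<close> rectangles and \<open>N\<^sup>1 \<ge> log\<^sub>2 n\<close>.\<close>

lemma interleave_prod_Cons [simp]:
  "interleave_prod M (x # xs) (y # ys) = x \<otimes>\<^bsub>M\<^esub> (y \<otimes>\<^bsub>M\<^esub> interleave_prod M xs ys)"
  by (simp add: interleave_prod_def)

context monoid
begin

lemma interleave_prod_replicate_one: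
  "interleave_prod G (replicate n \<one>) (replicate n \<one>) = \<one>"
  by (induction n) (simp_all add: interleave_prod_def)

lemma interleave_prod_update_left:
  assumes "p \<in> carrier G" and "i < n"
  shows "interleave_prod G ((replicate n \<one>)[i := p]) (replicate n \<one>) = p"
  using assms
proof (induction n arbitrary: i)
  case (Suc n)
  then show ?case
    by (cases i) (simp_all add: interleave_prod_replicate_one)
qed simp

lemma interleave_prod_update_right:
  assumes "q \<in> carrier G" and "j < n"
  shows "interleave_prod G (replicate n \<one>) ((replicate n \<one>)[j := q]) = q"
  using assms
proof (induction n arbitrary: j)
  case (Suc n)
  then show ?case
    by (cases j) (simp_all add: interleave_prod_replicate_one)
qed simp

lemma interleave_prod_update_both:
  assumes "p \<in> carrier G" and "q \<in> carrier G" and "i < n" and "j < n"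
  shows "interleave_prod G ((replicate n \<one>)[i := p]) ((replicate n \<one>)[j := q]) =
    (if i \<le> j then p \<otimes> q else q \<otimes> p)"
  using assms
proof (induction n arbitrary: i j)
  case (Suc n)
  then show ?case
    by (cases i; cases j)
      (simp_all add: interleave_prod_replicate_one interleave_prod_update_left
        interleave_prod_update_right)
qed simp

lemma replicate_one_update_in_inputs:
  "p \<in> carrier G \<Longrightarrow> (replicate n \<one>)[i := p] \<in> inputs G n"
  unfolding inputs_def using set_update_subset_insert[of "replicate n \<one>" i p] by auto

end

lemma finite_inputs: "finite (carrier M) \<Longrightarrow> finite (inputs M n)"
  unfolding inputs_def using finite_lists_length_eq[of "carrier M" n]
  by (simp add: conj_commute)

lemma C1_attained:
  assumes "finite X" and "finite Y"
  obtains R where "finite R" and "card R = C1 X Y f"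
    and "\<forall>(S, T)\<in>R. S \<subseteq> X \<and> T \<subseteq> Y \<and> (\<forall>x\<in>S. \<forall>y\<in>T. f x y)"
    and "(\<Union>(S, T)\<in>R. S \<times> T) = {(x, y). x \<in> X \<and> y \<in> Y \<and> f x y}"
proof -
  define ones where "ones = {(x, y). x \<in> X \<and> y \<in> Y \<and> f x y}"
  define singletons where "singletons = (\<lambda>(x, y). ({x}, {y})) ` ones"
  have "finite ones"
    unfolding ones_def
    by (rule finite_subset[OF _ finite_cartesian_product[OF assms]]) auto
  then have "\<exists>k R. finite R \<and> card R = k \<and>
      (\<forall>(S, T)\<in>R. S \<subseteq> X \<and> T \<subseteq> Y \<and> (\<forall>x\<in>S. \<forall>y\<in>T. f x y)) \<and>
      (\<Union>(S, T)\<in>R. S \<times> T) = ones"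
    by (intro exI[of _ "card singletons"] exI[of _ singletons])
      (auto simp: singletons_def ones_def)
  from LeastI_ex[OF this] show ?thesis
    using that unfolding C1_def ones_def by blast
qed

text \<open>A rectangle containing the 1-inputs \<open>(xs i, ys i)\<close> and \<open>(xs k, ys k)\<close> with \<open>i < k\<close>
  would also contain the 0-input \<open>(xs k, ys i)\<close>.\<close>

lemma C1_ge_triangular:
  assumes "finite X" and "finite Y"
    and in_X: "\<And>i. i < n \<Longrightarrow> xs i \<in> X" and in_Y: "\<And>i. i < n \<Longrightarrow> ys i \<in> Y"
    and diagonal: "\<And>i. i < n \<Longrightarrow> f (xs i) (ys i)"
    and below: "\<And>i k. i < k \<Longrightarrow> k < n \<Longrightarrow> \<not> f (xs k) (ys i)"
  shows "n \<le> C1 X Y f"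
proof -
  obtain R where "finite R" and card_R: "card R = C1 X Y f"
    and monochromatic: "\<forall>(S, T)\<in>R. S \<subseteq> X \<and> T \<subseteq> Y \<and> (\<forall>x\<in>S. \<forall>y\<in>T. f x y)"
    and cover: "(\<Union>(S, T)\<in>R. S \<times> T) = {(x, y). x \<in> X \<and> y \<in> Y \<and> f x y}"
    by (rule C1_attained[OF assms(1,2)])
  have "\<exists>r\<in>R. xs i \<in> fst r \<and> ys i \<in> snd r" if "i < n" for i
  proof -
    have "(xs i, ys i) \<in> (\<Union>(S, T)\<in>R. S \<times> T)"
      using cover in_X in_Y diagonal that by auto
    then show ?thesis by force
  qed
  then obtain g where g: "\<And>i. i < n \<Longrightarrow> g i \<in> R \<and> xs i \<in> fst (g i) \<and> ys i \<in> snd (g i)"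
    by metis
  have "inj_on g {..<n}"
  proof (rule linorder_inj_onI')
    fix i k assume "k \<in> {..<n}" and "i < k"
    show "g i \<noteq> g k"
    proof
      assume "g i = g k"
      obtain S T where "g k = (S, T)" by fastforce
      with g[of i] g[of k] \<open>i < k\<close> \<open>k \<in> {..<n}\<close> \<open>g i = g k\<close>
      have "(S, T) \<in> R" and "xs k \<in> S" and "ys i \<in> T" by auto
      then have "f (xs k) (ys i)" using monochromatic by blast
      with below \<open>i < k\<close> \<open>k \<in> {..<n}\<close> show False by simp
    qed
  qed
  moreover have "g ` {..<n} \<subseteq> R" using g by auto
  ultimately have "card {..<n} \<le> card R" using \<open>finite R\<close> by (rule card_inj_on_le)
  then show ?thesis using card_R by simp
qed

lemma N1_ideal_ge_log:
  assumes "monoid M" and "finite (carrier M)"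
    and "p \<in> carrier M" and "q \<in> carrier M"
    and "p \<otimes>\<^bsub>M\<^esub> q \<in> I" and "q \<otimes>\<^bsub>M\<^esub> p \<notin> I" and "n \<ge> 1"
  shows "log 2 (real n) \<le> N1_ideal M I n"
proof -
  interpret monoid M by fact
  let ?witness = "\<lambda>c i. (replicate n \<one>\<^bsub>M\<^esub>)[i := c]"
  have "n \<le> C1 (inputs M n) (inputs M n) (\<lambda>xs ys. interleave_prod M xs ys \<in> I)"
    by (rule C1_ge_triangular[where xs = "?witness p" and ys = "?witness q"])
      (use assms in \<open>simp_all add: finite_inputs replicate_one_update_in_inputs
        interleave_prod_update_both\<close>)
  then show ?thesis
    unfolding N1_ideal_def N1_def using \<open>n \<ge> 1\<close> by (intro log_mono) auto
qed

lemma N1_ideal_le_N1_monoid: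
  assumes "finite (carrier M)" and "order_ideal M leq I"
  shows "N1_ideal M I n \<le> N1_monoid M leq n"
proof -
  have "{N1_ideal M J n | J. order_ideal M leq J} \<subseteq> (\<lambda>J. N1_ideal M J n) ` Pow (carrier M)"
    by (auto simp: order_ideal_def)
  then have "finite {N1_ideal M J n | J. order_ideal M leq J}"
    by (rule finite_subset) (simp add: assms(1))
  then show ?thesis
    unfolding N1_monoid_def using assms(2) by (intro Max_ge) auto
qed

lemma order_ideal_principal:
  assumes "stable_order M leq" and "a \<in> carrier M"
  shows "order_ideal M leq {x \<in> carrier M. leq x a}"
  unfolding order_ideal_def
proof (intro conjI ballI impI)
  fix x y assume "y \<in> {x \<in> carrier M. leq x a}" and "x \<in> carrier M" and "leq x y"
  with assms show "x \<in> {x \<in> carrier M. leq x a}"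
    unfolding stable_order_def by blast
qed blast

lemma stable_order_not_comm_separates:
  assumes "monoid M" and "\<not> comm_monoid M" and "stable_order M leq"
  obtains p q where "p \<in> carrier M" and "q \<in> carrier M"
    and "\<not> leq (q \<otimes>\<^bsub>M\<^esub> p) (p \<otimes>\<^bsub>M\<^esub> q)"
proof -
  obtain a b where a: "a \<in> carrier M" and b: "b \<in> carrier M"
    and "a \<otimes>\<^bsub>M\<^esub> b \<noteq> b \<otimes>\<^bsub>M\<^esub> a"
    using assms(1,2) unfolding comm_monoid_def comm_monoid_axioms_def by blast
  moreover have "a \<otimes>\<^bsub>M\<^esub> b \<in> carrier M" and "b \<otimes>\<^bsub>M\<^esub> a \<in> carrier M"
    using assms(1) a b by (simp_all add: monoid.m_closed)
  ultimately have "\<not> leq (b \<otimes>\<^bsub>M\<^esub> a) (a \<otimes>\<^bsub>M\<^esub> b) \<or> \<not> leq (a \<otimes>\<^bsub>M\<^esub> b) (b \<otimes>\<^bsub>M\<^esub> a)"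
    using assms(3) unfolding stable_order_def by blast
  then show ?thesis
    using that a b by blast
qed

lemma bigomega_ln_if_eventually_ge_log:
  fixes f :: "nat \<Rightarrow> real"
  assumes "b > 1" and "eventually (\<lambda>n. log b (real n) \<le> f n) at_top"
  shows "f \<in> \<Omega>(\<lambda>n. ln (real n))"
proof (rule landau_omega.bigI[of "inverse (ln b)"])
  show "eventually (\<lambda>n. norm (f n) \<ge> inverse (ln b) * norm (ln (real n))) at_top"
    using assms(2) eventually_ge_at_top[of 1]
  proof eventually_elim
    case (elim n)
    have "inverse (ln b) * norm (ln (real n)) = log b (real n)"
      using elim(2) by (simp add: log_def field_simps)
    with elim(1) show ?case by simp
  qed
qed (use assms(1) in simp)

theorem mainTheorem6:
  fixes M :: "('a, 'b) monoid_scheme" and leq :: "'a \<Rightarrow> 'a \<Rightarrow> bool"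
  assumes "monoid M" and "finite (carrier M)" and "\<not> comm_monoid M"
    and "stable_order M leq"
  shows "N1_monoid M leq \<in> \<Omega>(\<lambda>n. ln (real n))"
proof -
  obtain p q where p: "p \<in> carrier M" and q: "q \<in> carrier M"
    and separated: "\<not> leq (q \<otimes>\<^bsub>M\<^esub> p) (p \<otimes>\<^bsub>M\<^esub> q)"
    using stable_order_not_comm_separates[OF assms(1,3,4)] by blast
  define I where "I = {x \<in> carrier M. leq x (p \<otimes>\<^bsub>M\<^esub> q)}"
  have "p \<otimes>\<^bsub>M\<^esub> q \<in> carrier M"
    using assms(1) p q by (rule monoid.m_closed)
  then have ideal: "order_ideal M leq I"
    and "p \<otimes>\<^bsub>M\<^esub> q \<in> I" and "q \<otimes>\<^bsub>M\<^esub> p \<notin> I"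
    using order_ideal_principal[OF assms(4)] assms(4) separated
    unfolding I_def stable_order_def by auto
  then have "log 2 (real n) \<le> N1_monoid M leq n" if "n \<ge> 1" for n
    using N1_ideal_ge_log[OF assms(1,2) p q _ _ that] N1_ideal_le_N1_monoid[OF assms(2) ideal]
    by (meson order_trans)
  then show ?thesis
    by (intro bigomega_ln_if_eventually_ge_log[of 2] eventually_mono[OF eventually_ge_at_top[of 1]])
      auto
qed

end
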